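(* Let $N \geq 12$ and $1 \le \Delta \leq \frac{N}{2}$ be integers. Then $f(N,\Delta) \leq \frac{N^2}{3}$.
   Context: All graphs are finite and simple; $L(G)$ is the line graph of $G$; $e(\cdot)$, $\Delta(\cdot)$, $\delta(\cdot)$ denote number of edges, maximum degree and minimum degree. For integers $N \ge \Delta \ge 1$, $f(N,\Delta) = \max\{ e(L(G)) : e(G)=N, \Delta(G)=\Delta, \delta(G)\geq 1\}$, the maximum over all simple graphs $G$. *)

theory Defs
  imports Complex_Main
begin

text \<open>A finite simple graph on vertex set V (vertices of type nat; every finite
  graph is isomorphic to one of this form): E is a set of 2-element subsets of V.\<close>
definition simple_graph :: "nat set \<Rightarrow> nat set set \<Rightarrow> bool" where
  "simple_graph V E \<longleftrightarrow> finite V \<and> V \<noteq> {} \<and> (\<forall>e\<in>E. e \<subseteq> V \<and> card e = 2)"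

definition degree :: "nat set set \<Rightarrow> nat \<Rightarrow> nat" where
  "degree E v = card {e\<in>E. v \<in> e}"

definition max_degree :: "nat set \<Rightarrow> nat set set \<Rightarrow> nat" where
  "max_degree V E = Max (degree E ` V)"

definition min_degree :: "nat set \<Rightarrow> nat set set \<Rightarrow> nat" where
  "min_degree V E = Min (degree E ` V)"

definition line_graph_edges :: "nat set set \<Rightarrow> nat set set set" where
  "line_graph_edges E = {{e, f} | e f. e \<in> E \<and> f \<in> E \<and> e \<noteq> f \<and> e \<inter> f \<noteq> {}}"

definition f_max :: "nat \<Rightarrow> nat \<Rightarrow> nat" where
  "f_max N D = Max {card (line_graph_edges E) | V E.
      simple_graph V E \<and> card E = N \<and> max_degree V E = D \<and> min_degree V E \<ge> 1}"

end

theory Submission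
  imports Defs
begin

(* Let x be a vertex of maximum degree D, S the D edges at x and R the remaining M = N - D
   edges. Adjacent pairs inside S number at most C(D,2). An edge of R meets at most two edges
   of S, because these are the edges {x,v} with v one of its endpoints. Adjacent pairs inside R
   number at most C(M,2), and also at most the sum over all v of C(d_R(v),2) <= M(D-1), since all
   degrees are at most D. For N >= 12 and 2D <= N the resulting bound
   C(D,2) + 2M + min(C(M,2), M(D-1)) is at most N^2/3: use M(D-1) when 3D <= N+1 and C(M,2)
   otherwise. *)

definition line_graph_edges_between :: "nat set set \<Rightarrow> nat set set \<Rightarrow> nat set set set" where
  "line_graph_edges_between A B = {{e, f} | e f. e \<in> A \<and> f \<in> B \<and> e \<inter> f \<noteq> {}}"

lemma finite_edges:
  assumes "finite V" "\<forall>e\<in>E. e \<subseteq> V"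
  shows "finite E"
  using assms by (meson Pow_iff finite_Pow_iff finite_subset subsetI)

lemma line_graph_edges_subset_pairs: "line_graph_edges E \<subseteq> {S. S \<subseteq> E \<and> card S = 2}"
  unfolding line_graph_edges_def by (auto simp: card_insert_if)

lemma card_line_graph_edges_le_choose:
  assumes "finite E"
  shows "card (line_graph_edges E) \<le> card E choose 2"
  using card_mono[OF _ line_graph_edges_subset_pairs[of E]] assms by (simp add: n_subsets)

lemma line_graph_edges_Un:
  "line_graph_edges (A \<union> B)
    \<subseteq> line_graph_edges A \<union> line_graph_edges B \<union> line_graph_edges_between A B"
proof
  fix p assume "p \<in> line_graph_edges (A \<union> B)"
  then obtain e f where p: "p = {e, f}" "e \<noteq> f" "e \<inter> f \<noteq> {}" and ef: "e \<in> A \<union> B" "f \<in> A \<union> B"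
    unfolding line_graph_edges_def by blast
  from ef consider "e \<in> A" "f \<in> A" | "e \<in> B" "f \<in> B" | "e \<in> A" "f \<in> B" | "e \<in> B" "f \<in> A"
    by blast
  then show "p \<in> line_graph_edges A \<union> line_graph_edges B \<union> line_graph_edges_between A B"
  proof cases
    case 1
    then show ?thesis using p unfolding line_graph_edges_def by blast
  next
    case 2
    then show ?thesis using p unfolding line_graph_edges_def by blast
  next
    case 3
    then show ?thesis using p unfolding line_graph_edges_between_def by blast
  next
    case 4
    moreover have "p = {f, e}" "f \<inter> e \<noteq> {}" using p by auto
    ultimately show ?thesis unfolding line_graph_edges_between_def by blast
  qed
qed

lemma card_line_graph_edges_Un_le:
  assumes "finite A" "finite B"
  shows "card (line_graph_edges (A \<union> B))
    \<le> card (line_graph_edges A) + card (line_graph_edges B) + card (line_graph_edges_between A B)"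
proof -
  have "line_graph_edges A \<union> line_graph_edges B \<union> line_graph_edges_between A B \<subseteq> Pow (A \<union> B)"
    unfolding line_graph_edges_def line_graph_edges_between_def by auto
  then have "finite (line_graph_edges A \<union> line_graph_edges B \<union> line_graph_edges_between A B)"
    by (rule finite_subset) (simp add: assms)
  then have "card (line_graph_edges (A \<union> B))
      \<le> card (line_graph_edges A \<union> line_graph_edges B \<union> line_graph_edges_between A B)"
    using line_graph_edges_Un by (rule card_mono)
  also have "\<dots> \<le> card (line_graph_edges A) + card (line_graph_edges B) + card (line_graph_edges_between A B)"
    by (meson card_Un_le add_le_mono order_trans le_refl)
  finally show ?thesis .
qed

lemma card_line_graph_edges_between_le:
  assumes "finite A" "finite B"
  shows "card (line_graph_edges_between A B) \<le> (\<Sum>f\<in>B. card {e\<in>A. e \<inter> f \<noteq> {}})"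
proof -
  let ?pairs = "SIGMA f:B. {e\<in>A. e \<inter> f \<noteq> {}}"
  have "line_graph_edges_between A B = (\<lambda>(f, e). {e, f}) ` ?pairs"
    unfolding line_graph_edges_between_def by auto
  moreover have "card ((\<lambda>(f, e). {e, f}) ` ?pairs) \<le> card ?pairs"
    using assms by (intro card_image_le) auto
  ultimately show ?thesis
    using assms by simp
qed

lemma card_star_edges_meeting_le:
  assumes "\<forall>e\<in>A. x \<in> e \<and> card e = 2" "x \<notin> f" "finite f"
  shows "card {e\<in>A. e \<inter> f \<noteq> {}} \<le> card f"
proof -
  have "{e\<in>A. e \<inter> f \<noteq> {}} \<subseteq> (\<lambda>v. {x, v}) ` f"
  proof
    fix e assume e: "e \<in> {e\<in>A. e \<inter> f \<noteq> {}}"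
    then obtain v where "e = {x, v}"
      using assms(1) by (metis (no_types, lifting) card_2_iff insert_commute insertE mem_Collect_eq singletonD)
    with e assms(2) show "e \<in> (\<lambda>v. {x, v}) ` f" by auto
  qed
  then show ?thesis
    using assms(3) by (meson card_image_le card_mono finite_imageI order_trans)
qed

lemma card_line_graph_edges_between_star_le:
  assumes "finite S" "finite R"
    and "\<forall>e\<in>S. x \<in> e \<and> card e = 2" "\<forall>f\<in>R. x \<notin> f \<and> card f = 2"
  shows "card (line_graph_edges_between S R) \<le> 2 * card R"
proof -
  have "card (line_graph_edges_between S R) \<le> (\<Sum>f\<in>R. card {e\<in>S. e \<inter> f \<noteq> {}})"
    using assms(1,2) by (rule card_line_graph_edges_between_le)
  also have "\<dots> \<le> (\<Sum>f\<in>R. card f)"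
  proof (rule sum_mono)
    fix f assume "f \<in> R"
    with assms(4) have "x \<notin> f" "card f = 2" by auto
    moreover from \<open>card f = 2\<close> have "finite f" by (metis card.infinite zero_neq_numeral)
    ultimately show "card {e\<in>S. e \<inter> f \<noteq> {}} \<le> card f"
      using assms(3) by (intro card_star_edges_meeting_le)
  qed
  also have "\<dots> = 2 * card R"
    using assms(4) by simp
  finally show ?thesis .
qed

lemma degree_mono:
  assumes "finite E" "E' \<subseteq> E"
  shows "degree E' v \<le> degree E v"
  unfolding degree_def using assms by (intro card_mono) auto

lemma sum_degree_eq_sum_card:
  assumes "finite V" "finite E" "\<forall>e\<in>E. e \<subseteq> V"
  shows "(\<Sum>v\<in>V. degree E v) = (\<Sum>e\<in>E. card e)"
proof -
  have "(\<Sum>v\<in>V. degree E v) = (\<Sum>v\<in>V. \<Sum>e\<in>E. if v \<in> e then 1 else 0)"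
    unfolding degree_def using assms(2) by (simp add: sum.If_cases Int_def)
  also have "\<dots> = (\<Sum>e\<in>E. \<Sum>v\<in>V. if v \<in> e then 1 else 0)"
    by (rule sum.swap)
  also have "\<dots> = (\<Sum>e\<in>E. card e)"
  proof (rule sum.cong)
    fix e assume "e \<in> E"
    then have "V \<inter> {v. v \<in> e} = e" using assms(3) by auto
    then show "(\<Sum>v\<in>V. if v \<in> e then 1 else 0) = card e"
      using assms(1) by (simp add: sum.If_cases)
  qed simp
  finally show ?thesis .
qed

lemma card_line_graph_edges_le_sum_choose:
  assumes "finite V" "\<forall>e\<in>E. e \<subseteq> V"
  shows "card (line_graph_edges E) \<le> (\<Sum>v\<in>V. degree E v choose 2)"
proof -
  have fin: "finite E" using assms by (rule finite_edges)
  have "line_graph_edges E \<subseteq> (\<Union>v\<in>V. {S. S \<subseteq> {e\<in>E. v \<in> e} \<and> card S = 2})"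
  proof
    fix p assume "p \<in> line_graph_edges E"
    then obtain e f v where p: "p = {e, f}" "e \<in> E" "f \<in> E" "e \<noteq> f" "v \<in> e" "v \<in> f"
      unfolding line_graph_edges_def by auto
    then have "v \<in> V" using assms(2) by auto
    with p show "p \<in> (\<Union>v\<in>V. {S. S \<subseteq> {e\<in>E. v \<in> e} \<and> card S = 2})" by auto
  qed
  then have "card (line_graph_edges E) \<le> card (\<Union>v\<in>V. {S. S \<subseteq> {e\<in>E. v \<in> e} \<and> card S = 2})"
    by (rule card_mono[rotated]) (use assms(1) fin in auto)
  also have "\<dots> \<le> (\<Sum>v\<in>V. card {S. S \<subseteq> {e\<in>E. v \<in> e} \<and> card S = 2})"
    using assms(1) by (rule card_UN_le)
  also have "\<dots> = (\<Sum>v\<in>V. degree E v choose 2)"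
    using fin by (simp add: n_subsets degree_def)
  finally show ?thesis .
qed

lemma two_mult_choose_two: "2 * (n choose 2) = n * (n - 1)"
proof -
  have "even (n * (n - 1))" by (cases "even n") auto
  then show ?thesis by (simp add: choose_two)
qed

lemma card_line_graph_edges_le_degree_bound:
  assumes "finite V" "\<forall>e\<in>E. e \<subseteq> V \<and> card e = 2" "\<forall>v\<in>V. degree E v \<le> d"
  shows "card (line_graph_edges E) \<le> card E * (d - 1)"
proof -
  have fin: "finite E" using assms(1,2) by (meson finite_edges)
  have "2 * card (line_graph_edges E) \<le> 2 * (\<Sum>v\<in>V. degree E v choose 2)"
    using card_line_graph_edges_le_sum_choose assms by (meson mult_le_mono2)
  also have "\<dots> = (\<Sum>v\<in>V. degree E v * (degree E v - 1))"
    by (simp add: sum_distrib_left two_mult_choose_two)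
  also have "\<dots> \<le> (\<Sum>v\<in>V. degree E v * (d - 1))"
    using assms(3) by (intro sum_mono mult_le_mono2 diff_le_mono) auto
  also have "\<dots> = (\<Sum>v\<in>V. degree E v) * (d - 1)"
    by (simp add: sum_distrib_right)
  also have "\<dots> = (\<Sum>e\<in>E. card e) * (d - 1)"
    using assms fin by (simp add: sum_degree_eq_sum_card)
  also have "\<dots> = 2 * (card E * (d - 1))"
    using assms(2) by simp
  finally show ?thesis by simp
qed

lemma max_degree_attained:
  assumes "simple_graph V E"
  obtains x where "x \<in> V" "degree E x = max_degree V E" "\<forall>v\<in>V. degree E v \<le> degree E x"
proof -
  have fin: "finite (degree E ` V)" and ne: "degree E ` V \<noteq> {}"
    using assms unfolding simple_graph_def by auto
  obtain x where "x \<in> V" "degree E x = max_degree V E"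
    using Max_in[OF fin ne] unfolding max_degree_def by auto
  moreover have "degree E v \<le> max_degree V E" if "v \<in> V" for v
    unfolding max_degree_def using fin that by simp
  ultimately show ?thesis using that by simp
qed

lemma card_line_graph_edges_le_star_bound:
  assumes G: "simple_graph V E" and max: "\<forall>v\<in>V. degree E v \<le> degree E x"
  defines "d \<equiv> degree E x" and "m \<equiv> card E - degree E x"
  shows "card (line_graph_edges E) \<le> (d choose 2) + 2 * m + min (m choose 2) (m * (d - 1))"
proof -
  have fV: "finite V" and edges: "\<forall>e\<in>E. e \<subseteq> V \<and> card e = 2"
    using G unfolding simple_graph_def by auto
  then have fE: "finite E" by (meson finite_edges)
  define S where "S = {e\<in>E. x \<in> e}"
  define R where "R = E - S"
  have E_eq: "E = S \<union> R" and fS: "finite S" and fR: "finite R"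
    using fE unfolding S_def R_def by auto
  have cS: "card S = d" unfolding S_def d_def degree_def ..
  have cR: "card R = m" unfolding R_def m_def
    using fE cS by (simp add: card_Diff_subset S_def d_def)
  have LS: "card (line_graph_edges S) \<le> d choose 2"
    using card_line_graph_edges_le_choose[OF fS] cS by simp
  have LSR: "card (line_graph_edges_between S R) \<le> 2 * m"
    using card_line_graph_edges_between_star_le[OF fS fR] edges cR unfolding S_def R_def by auto
  have "card (line_graph_edges R) \<le> m choose 2"
    using card_line_graph_edges_le_choose[OF fR] cR by simp
  moreover have "card (line_graph_edges R) \<le> m * (d - 1)"
  proof -
    have "degree R v \<le> d" if "v \<in> V" for v
      using degree_mono[OF fE, of R v] max that unfolding R_def d_def by fastforce
    then show ?thesis
      using card_line_graph_edges_le_degree_bound[of V R d] fV edges cR unfolding R_def by auto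
  qed
  ultimately have LR: "card (line_graph_edges R) \<le> min (m choose 2) (m * (d - 1))" by simp
  show ?thesis
    using card_line_graph_edges_Un_le[OF fS fR] LS LSR LR unfolding E_eq by linarith
qed

(* At N = 3D - 1 this needs D to be an integer: it fails for N = 12, D = 13/3. *)
lemma star_bound_arith_low_degree:
  fixes N D :: int
  assumes "1 \<le> D" "12 \<le> N" "3*D \<le> N + 1"
  shows "3*(D*(D-1)) + 12*(N-D) + 6*((N-D)*(D-1)) \<le> 2*N^2"
proof -
  have "0 \<le> (D-1)*(N-12)" "0 \<le> (N+1-3*D)*(N-12)" "0 \<le> D*(N+1-3*D)" "0 \<le> (N+1-3*D)^2"
    using assms by simp_all
  then show ?thesis using assms by (simp add: algebra_simps power2_eq_square)
qed

lemma star_bound_arith_high_degree: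
  fixes N D :: int
  assumes "12 \<le> N" "2*D \<le> N" "N + 2 \<le> 3*D"
  shows "3*(D*(D-1)) + 12*(N-D) + 3*((N-D)*(N-D-1)) \<le> 2*N^2"
proof -
  have "0 \<le> (N-2*D)*(3*D-N-2)" "0 \<le> (3*D-14)^2" "0 \<le> (N-2*D)^2"
    using assms by simp_all
  then show ?thesis using assms by (simp add: algebra_simps power2_eq_square)
qed

lemma three_mult_star_bound_le_square:
  fixes N D :: nat
  assumes "12 \<le> N" "1 \<le> D" "2*D \<le> N"
  shows "3 * ((D choose 2) + 2*(N-D) + min ((N-D) choose 2) ((N-D)*(D-1))) \<le> N^2"
proof -
  have "D \<le> N" "1 \<le> N - D" using assms by simp_all
  note int_eqs = of_nat_add of_nat_mult of_nat_power of_nat_numeral of_nat_1 of_nat_diff this assms(2)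
  show ?thesis
  proof (cases "3*D \<le> N+1")
    case True
    have "3*(int D*(int D-1)) + 12*(int N-int D) + 6*((int N-int D)*(int D-1)) \<le> 2*(int N)^2"
      by (rule star_bound_arith_low_degree) (use assms True in auto)
    then have "int (3*(D*(D-1)) + 12*(N-D) + 6*((N-D)*(D-1))) \<le> int (2*N^2)"
      by (simp only: int_eqs)
    then have "3*(D*(D-1)) + 12*(N-D) + 6*((N-D)*(D-1)) \<le> 2*N^2"
      by (simp only: of_nat_le_iff)
    moreover have "min ((N-D) choose 2) ((N-D)*(D-1)) \<le> (N-D)*(D-1)" by simp
    ultimately show ?thesis using two_mult_choose_two[of D] unfolding distrib_left by linarith
  next
    case False
    have "3*(int D*(int D-1)) + 12*(int N-int D) + 3*((int N-int D)*(int N-int D-1)) \<le> 2*(int N)^2"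
      by (rule star_bound_arith_high_degree) (use assms False in auto)
    then have "int (3*(D*(D-1)) + 12*(N-D) + 3*((N-D)*(N-D-1))) \<le> int (2*N^2)"
      by (simp only: int_eqs)
    then have "3*(D*(D-1)) + 12*(N-D) + 3*((N-D)*(N-D-1)) \<le> 2*N^2"
      by (simp only: of_nat_le_iff)
    moreover have "min ((N-D) choose 2) ((N-D)*(D-1)) \<le> (N-D) choose 2" by simp
    ultimately show ?thesis using two_mult_choose_two[of D] two_mult_choose_two[of "N-D"] unfolding distrib_left by linarith
  qed
qed

lemma three_mult_card_line_graph_edges_le:
  assumes "simple_graph V E" "card E = N" "max_degree V E = D"
    and "12 \<le> N" "1 \<le> D" "2 * D \<le> N"
  shows "3 * card (line_graph_edges E) \<le> N^2"
proof -
  obtain x where x: "x \<in> V" "degree E x = D" "\<forall>v\<in>V. degree E v \<le> degree E x"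
    using max_degree_attained[OF assms(1)] assms(3) by metis
  have "card (line_graph_edges E) \<le> (D choose 2) + 2 * (N - D) + min ((N - D) choose 2) ((N - D) * (D - 1))"
    using card_line_graph_edges_le_star_bound[OF assms(1) x(3)] x(2) assms(2) by simp
  then have "3 * card (line_graph_edges E)
      \<le> 3 * ((D choose 2) + 2 * (N - D) + min ((N - D) choose 2) ((N - D) * (D - 1)))"
    by simp
  also have "\<dots> \<le> N^2"
    using assms(4-6) by (rule three_mult_star_bound_le_square)
  finally show ?thesis .
qed

lemma exists_star_plus_matching:
  fixes N D :: nat
  assumes "1 \<le> D" "D \<le> N"
  shows "\<exists>V E. simple_graph V E \<and> card E = N \<and> max_degree V E = D \<and> min_degree V E \<ge> 1"
proof -
  define star where "star = (\<lambda>i. {0, i}) ` {1..D}"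
  define matching where "matching = (\<lambda>i. {2 * i, 2 * i + 1}) ` {D<..N}"
  define V where "V = {0..D} \<union> {2 * D + 2..2 * N + 1}"
  define E where "E = star \<union> matching"
  have G: "simple_graph V E"
    unfolding simple_graph_def V_def E_def star_def matching_def by auto
  have "card star = D"
    unfolding star_def by (subst card_image) (auto simp: inj_on_def doubleton_eq_iff)
  moreover have "card matching = N - D"
    unfolding matching_def by (subst card_image) (auto simp: inj_on_def doubleton_eq_iff)
  moreover have "star \<inter> matching = {}"
    unfolding star_def matching_def by (auto simp: doubleton_eq_iff)
  ultimately have "card E = N"
    unfolding E_def using assms by (simp add: card_Un_disjoint star_def matching_def)
  have centre: "degree E 0 = D"
  proof -
    have "{e\<in>E. 0 \<in> e} = star" unfolding E_def star_def matching_def by auto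
    then show ?thesis using \<open>card star = D\<close> unfolding degree_def by simp
  qed
  have other: "degree E v = 1" if "v \<in> V" "v \<noteq> 0" for v
  proof (cases "v \<le> D")
    case True
    then have "{e\<in>E. v \<in> e} = {{0, v}}"
      using that unfolding E_def star_def matching_def by auto
    then show ?thesis unfolding degree_def by simp
  next
    case False
    then have "v div 2 \<in> {D<..N}" "v = 2 * (v div 2) \<or> v = 2 * (v div 2) + 1"
      using that unfolding V_def by auto
    then have "{e\<in>E. v \<in> e} = {{2 * (v div 2), 2 * (v div 2) + 1}}"
      using False unfolding E_def star_def matching_def by auto
    then show ?thesis unfolding degree_def by simp
  qed
  have "degree E ` V = {D, 1}"
  proof -
    have "0 \<in> V" "1 \<in> V" using assms unfolding V_def by auto
    then show ?thesis using centre other by force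
  qed
  then have "max_degree V E = D" "min_degree V E = 1"
    unfolding max_degree_def min_degree_def using assms by auto
  then show ?thesis using G \<open>card E = N\<close> by (metis order_refl)
qed

theorem mainTheorem15:
  fixes N D :: nat
  assumes "N \<ge> 12" and "1 \<le> D" and "real D \<le> real N / 2"
  shows "real (f_max N D) \<le> real N ^ 2 / 3"
proof -
  have "2 * D \<le> N" using assms(3) by linarith
  define sizes where "sizes = {card (line_graph_edges E) | V E.
      simple_graph V E \<and> card E = N \<and> max_degree V E = D \<and> min_degree V E \<ge> 1}"
  have bound: "3 * c \<le> N^2" if "c \<in> sizes" for c
    using that three_mult_card_line_graph_edges_le assms(1,2) \<open>2 * D \<le> N\<close>
    unfolding sizes_def by blast
  have "finite sizes"
    using bound by (intro finite_subset[of sizes "{..N^2}"]) fastforce+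
  \<comment> \<open>\<open>Max {}\<close> is unspecified, so a witness graph is needed.\<close>
  moreover have "sizes \<noteq> {}"
    using exists_star_plus_matching[of D N] assms(2) \<open>2 * D \<le> N\<close> unfolding sizes_def by auto
  ultimately have "3 * f_max N D \<le> N^2"
    unfolding f_max_def sizes_def[symmetric] using bound by simp
  then have "real (3 * f_max N D) \<le> real (N^2)"
    by (simp only: of_nat_le_iff)
  then show ?thesis by simp
qed

end
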